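(* Let $\Phi(\mathbf{x})=\sum_{v\in V}\mathbf{x}_v^2$. For every $\mathbf{x}\in\Delta_n$ we have $\Phi(g(\mathbf{x}))\ge\Phi(\mathbf{x})$, with equality only if $\mathbf{x}$ is a fixed point of $g$. Consequently, for every starting point $\mathbf{x}^{(0)}\in\Delta_n$, every limit point of the trajectory $\mathbf{x}^{(t)}=g^t(\mathbf{x}^{(0)})$ is a fixed point of $g$.
   Context: $G=(V,E)$ is a finite undirected graph with $n$ vertices, $N_u$ the neighbourhood of $u$, $\Delta_n=\{\mathbf{x}\in\mathbb{R}^n_{\ge 0}:\sum_v\mathbf{x}_v=1\}$. For every edge $uv\in E$, $F_{uv}=F_{vu}:[-1,1]\to[-1,1]$ is continuously differentiable, $F_{uv}(0)=0$, increasing and odd. The map $g:\Delta_n\to\Delta_n$ is $g(\mathbf{x})_u=\mathbf{x}_u+\sum_{v\in N_u}\mathbf{x}_u\mathbf{x}_vF_{uv}(\mathbf{x}_u-\mathbf{x}_v)$; a fixed point is $\mathbf{p}$ with $g(\mathbf{p})=\mathbf{p}$. *)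

theory Defs
  imports "HOL-Analysis.Analysis"
begin

text \<open>Vertices are the elements of a finite type 'v (so n = CARD('v)); the graph is given by a
symmetric irreflexive edge relation E; points of R^n are functions 'v \<Rightarrow> real.\<close>

definition std_simplex :: "('v::finite \<Rightarrow> real) set" where
  "std_simplex = {x. (\<forall>v. 0 \<le> x v) \<and> (\<Sum>v\<in>UNIV. x v) = 1}"

definition nbhd :: "('v \<Rightarrow> 'v \<Rightarrow> bool) \<Rightarrow> 'v \<Rightarrow> 'v set" where
  "nbhd E u = {v. E u v}"

definition gmap :: "('v::finite \<Rightarrow> 'v \<Rightarrow> bool) \<Rightarrow> ('v \<Rightarrow> 'v \<Rightarrow> real \<Rightarrow> real)
                     \<Rightarrow> ('v \<Rightarrow> real) \<Rightarrow> ('v \<Rightarrow> real)" where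
  "gmap E F x = (\<lambda>u. x u + (\<Sum>v\<in>nbhd E u. x u * x v * F u v (x u - x v)))"

definition Phi :: "('v::finite \<Rightarrow> real) \<Rightarrow> real" where
  "Phi x = (\<Sum>v\<in>UNIV. (x v)\<^sup>2)"

definition admissible :: "('v \<Rightarrow> 'v \<Rightarrow> bool) \<Rightarrow> ('v \<Rightarrow> 'v \<Rightarrow> real \<Rightarrow> real) \<Rightarrow> bool" where
  "admissible E F \<longleftrightarrow>
     (\<forall>u v. E u v \<longleftrightarrow> E v u) \<and> (\<forall>u. \<not> E u u) \<and>
     (\<forall>u v. E u v \<longrightarrow>
        F u v = F v u \<and>
        (\<forall>t\<in>{-1..1}. F u v t \<in> {-1..1}) \<and>
        (\<exists>F'. (\<forall>t\<in>{-1..1}. (F u v has_real_derivative F' t) (at t within {-1..1}))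
              \<and> continuous_on {-1..1} F') \<and>
        F u v 0 = 0 \<and>
        mono_on {-1..1} (F u v) \<and>
        (\<forall>t\<in>{-1..1}. F u v (-t) = - F u v t))"

end

theory Submission
  imports Defs
begin

(* Writing g(x) = x + d(x), the flux d(x) has total mass zero and satisfies
   <x, d(x)> = 1/2 \<Sum>_{uv\<in>E} x_u x_v (x_u - x_v) F_uv(x_u - x_v) \<ge> 0 because F_uv is odd
   and increasing. Hence \<Phi>(g x) = \<Phi> x + 2<x, d(x)> + |d(x)|^2 \<ge> \<Phi> x, with equality only
   if d(x) = 0. So \<Phi> is a continuous Lyapunov function for g on the compact simplex, and
   along a convergent subsequence of a trajectory \<Phi>(p) = lim \<Phi>(x^(t)) = \<Phi>(g p). *)

lemma limit_point_fixed_by_Lyapunov: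
  fixes f :: "'a::topological_space \<Rightarrow> 'a" and V :: "'a \<Rightarrow> real"
  assumes "closed S" and f_S: "f ` S \<subseteq> S" and f_cont: "continuous_on S f"
    and V_cont: "continuous_on S V" and V_bound: "\<And>x. x \<in> S \<Longrightarrow> V x \<le> B"
    and V_mono: "\<And>x. x \<in> S \<Longrightarrow> V x \<le> V (f x)"
    and V_strict: "\<And>x. x \<in> S \<Longrightarrow> V (f x) = V x \<Longrightarrow> f x = x"
    and "x0 \<in> S" and r: "strict_mono r" and lim: "(\<lambda>k. (f ^^ r k) x0) \<longlonglongrightarrow> p"
  shows "f p = p"
proof -
  define X where "X k = (f ^^ k) x0" for k
  have X_S: "X k \<in> S" for k
    by (induction k) (use \<open>x0 \<in> S\<close> f_S in \<open>auto simp: X_def\<close>)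
  have X_Suc: "X (Suc k) = f (X k)" for k
    by (simp add: X_def)
  have "incseq (\<lambda>k. V (X k))"
    by (rule incseq_SucI) (simp add: X_Suc V_mono X_S)
  then obtain L where L: "(\<lambda>k. V (X k)) \<longlonglongrightarrow> L"
    by (rule incseq_convergent[where B = B]) (simp_all add: V_bound X_S)
  have lim_X: "(\<lambda>k. X (r k)) \<longlonglongrightarrow> p"
    using lim by (simp add: X_def)
  have "p \<in> S"
    using Lim_in_closed_set[OF \<open>closed S\<close> _ _ lim_X] X_S by simp
  have "(\<lambda>k. V (X (r k))) \<longlonglongrightarrow> V p"
    using continuous_on_tendsto_compose[OF V_cont lim_X \<open>p \<in> S\<close>] X_S by simp
  moreover have "(\<lambda>k. V (X (r k))) \<longlonglongrightarrow> L"
    using LIMSEQ_subseq_LIMSEQ[OF L r] by (simp add: comp_def)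
  ultimately have "V p = L"
    by (rule LIMSEQ_unique)
  have "(\<lambda>k. f (X (r k))) \<longlonglongrightarrow> f p"
    using continuous_on_tendsto_compose[OF f_cont lim_X \<open>p \<in> S\<close>] X_S by simp
  then have "(\<lambda>k. V (X (Suc (r k)))) \<longlonglongrightarrow> V (f p)"
    unfolding X_Suc
    by (rule continuous_on_tendsto_compose[OF V_cont])
      (use \<open>p \<in> S\<close> X_S f_S in \<open>auto simp: image_subset_iff\<close>)
  moreover have "strict_mono (\<lambda>k. Suc (r k))"
    using r by (simp add: strict_mono_def)
  then have "(\<lambda>k. V (X (Suc (r k)))) \<longlonglongrightarrow> L"
    using LIMSEQ_subseq_LIMSEQ[OF L] by (simp add: comp_def)
  ultimately have "V (f p) = V p"
    using \<open>V p = L\<close> LIMSEQ_unique by blast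
  then show ?thesis
    using V_strict \<open>p \<in> S\<close> by blast
qed

lemma std_simplex_nonneg: "x \<in> std_simplex \<Longrightarrow> 0 \<le> x v"
  by (simp add: std_simplex_def)

lemma std_simplex_sum: "x \<in> std_simplex \<Longrightarrow> (\<Sum>v\<in>UNIV. x v) = 1"
  by (simp add: std_simplex_def)

lemma std_simplex_le_one:
  assumes "x \<in> std_simplex"
  shows "x v \<le> 1"
proof -
  have "x v \<le> (\<Sum>w\<in>UNIV. x w)"
    by (rule member_le_sum) (use assms in \<open>auto simp: std_simplex_nonneg\<close>)
  then show ?thesis
    using assms by (simp add: std_simplex_sum)
qed

lemma std_simplex_diff_bounded: "x \<in> std_simplex \<Longrightarrow> x u - x v \<in> {-1..1}"
  using std_simplex_nonneg[of x u] std_simplex_nonneg[of x v]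
    std_simplex_le_one[of x u] std_simplex_le_one[of x v] by auto

lemma closed_std_simplex: "closed (std_simplex :: ('v::finite \<Rightarrow> real) set)"
proof -
  have "std_simplex = (\<Inter>v. {x::'v \<Rightarrow> real. 0 \<le> x v}) \<inter> {x. (\<Sum>v\<in>UNIV. x v) = 1}"
    by (auto simp: std_simplex_def)
  also have "closed \<dots>"
    by (intro closed_Int closed_INT ballI closed_Collect_le closed_Collect_eq continuous_intros
        continuous_on_product_coordinates)
  finally show ?thesis .
qed

lemma Phi_le_one: "x \<in> std_simplex \<Longrightarrow> Phi x \<le> 1"
  unfolding Phi_def
  using sum_mono[of UNIV "\<lambda>v. (x v)\<^sup>2" x] std_simplex_nonneg[of x] std_simplex_le_one[of x]
  by (simp add: std_simplex_sum power2_eq_square mult_left_le_one_le)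

lemma Phi_add: "Phi (\<lambda>v. x v + d v) = Phi x + 2 * (\<Sum>v\<in>UNIV. x v * d v) + Phi d"
  by (simp add: Phi_def power2_eq_square algebra_simps sum.distrib sum_distrib_left)

lemma Phi_nonneg: "0 \<le> Phi x"
  by (simp add: Phi_def sum_nonneg)

lemma Phi_eq_0_iff: "Phi d = 0 \<longleftrightarrow> (\<forall>v. d v = 0)"
  by (simp add: Phi_def sum_nonneg_eq_0_iff fun_eq_iff)

lemma continuous_on_Phi: "continuous_on S Phi"
  unfolding Phi_def
  by (intro continuous_intros continuous_on_subset[OF continuous_on_product_coordinates]) simp

lemma admissible_sym: "admissible E F \<Longrightarrow> E u v \<longleftrightarrow> E v u"
  unfolding admissible_def by blast

lemma admissible_swap:
  assumes "admissible E F" "E u v" "t \<in> {-1..1}"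
  shows "F v u (- t) = - F u v t"
proof -
  have "F v u = F u v" and "\<forall>t\<in>{-1..1}. F u v (- t) = - F u v t"
    using assms(1,2) unfolding admissible_def by blast+
  with assms(3) show ?thesis by simp
qed

lemma admissible_range:
  assumes "admissible E F" "E u v" "t \<in> {-1..1}"
  shows "\<bar>F u v t\<bar> \<le> 1"
proof -
  have "\<forall>t\<in>{-1..1}. F u v t \<in> {-1..1}"
    using assms(1,2) unfolding admissible_def by blast
  with assms(3) show ?thesis
    by (simp add: abs_le_iff)
qed

lemma admissible_sign:
  assumes "admissible E F" "E u v" "t \<in> {-1..1}"
  shows "0 \<le> t * F u v t"
proof -
  have mono: "mono_on {-1..1} (F u v)" and "F u v 0 = 0"
    using assms(1,2) unfolding admissible_def by blast+
  show ?thesis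
  proof (cases "0 \<le> t")
    case True
    then have "F u v 0 \<le> F u v t"
      using mono_onD[OF mono _ assms(3)] by simp
    with True \<open>F u v 0 = 0\<close> show ?thesis by simp
  next
    case False
    then have "F u v t \<le> F u v 0"
      using mono_onD[OF mono assms(3)] by simp
    with False \<open>F u v 0 = 0\<close> show ?thesis by (simp add: mult_nonpos_nonpos)
  qed
qed

lemma admissible_continuous:
  assumes "admissible E F" "E u v"
  shows "continuous_on {-1..1} (F u v)"
proof -
  obtain F' where "\<forall>t\<in>{-1..1}. (F u v has_real_derivative F' t) (at t within {-1..1})"
    using assms unfolding admissible_def by blast
  then show ?thesis
    by (intro DERIV_continuous_on) auto
qed

lemma sum_nbhd_symmetrize:
  fixes h :: "'v::finite \<Rightarrow> 'v \<Rightarrow> real"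
  assumes "\<And>u v. E u v \<longleftrightarrow> E v u"
  shows "2 * (\<Sum>u\<in>UNIV. \<Sum>v\<in>nbhd E u. h u v) = (\<Sum>u\<in>UNIV. \<Sum>v\<in>nbhd E u. h u v + h v u)"
proof -
  have nbhd_sum: "(\<Sum>v\<in>nbhd E u. k v) = (\<Sum>v\<in>UNIV. if E u v then k v else 0)"
    for u and k :: "'v \<Rightarrow> real"
    by (simp add: nbhd_def sum.If_cases)
  have "(\<Sum>u\<in>UNIV. \<Sum>v\<in>nbhd E u. h u v) = (\<Sum>u\<in>UNIV. \<Sum>v\<in>UNIV. if E u v then h u v else 0)"
    by (simp add: nbhd_sum)
  also have "\<dots> = (\<Sum>v\<in>UNIV. \<Sum>u\<in>UNIV. if E u v then h u v else 0)"
    by (rule sum.swap)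
  also have "\<dots> = (\<Sum>u\<in>UNIV. \<Sum>v\<in>nbhd E u. h v u)"
    by (simp add: nbhd_sum assms)
  finally show ?thesis
    by (simp add: sum.distrib)
qed

definition flux :: "('v::finite \<Rightarrow> 'v \<Rightarrow> bool) \<Rightarrow> ('v \<Rightarrow> 'v \<Rightarrow> real \<Rightarrow> real)
                     \<Rightarrow> ('v \<Rightarrow> real) \<Rightarrow> 'v \<Rightarrow> real" where
  "flux E F x u = (\<Sum>v\<in>nbhd E u. x u * x v * F u v (x u - x v))"

lemma gmap_eq_add_flux: "gmap E F x = (\<lambda>u. x u + flux E F x u)"
  by (simp add: gmap_def flux_def)

lemma flux_term_antisym:
  assumes "admissible E F" "E u v" "x \<in> std_simplex"
  shows "x v * x u * F v u (x v - x u) = - (x u * x v * F u v (x u - x v))"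
  using admissible_swap[OF assms(1,2) std_simplex_diff_bounded[OF assms(3)]] by simp

lemma sum_flux_eq_0:
  assumes "admissible E F" "x \<in> std_simplex"
  shows "(\<Sum>u\<in>UNIV. flux E F x u) = 0"
proof -
  have "2 * (\<Sum>u\<in>UNIV. flux E F x u)
      = (\<Sum>u\<in>UNIV. \<Sum>v\<in>nbhd E u. x u * x v * F u v (x u - x v) + x v * x u * F v u (x v - x u))"
    unfolding flux_def by (rule sum_nbhd_symmetrize) (rule admissible_sym[OF assms(1)])
  also have "\<dots> = 0"
    using flux_term_antisym[OF assms(1) _ assms(2)] by (simp add: nbhd_def)
  finally show ?thesis by simp
qed

lemma inner_flux_nonneg:
  assumes "admissible E F" "x \<in> std_simplex"
  shows "0 \<le> (\<Sum>u\<in>UNIV. x u * flux E F x u)"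
proof -
  define h where "h u v = x u * (x u * x v * F u v (x u - x v))" for u v
  have "2 * (\<Sum>u\<in>UNIV. x u * flux E F x u) = 2 * (\<Sum>u\<in>UNIV. \<Sum>v\<in>nbhd E u. h u v)"
    by (simp add: flux_def h_def sum_distrib_left)
  also have "\<dots> = (\<Sum>u\<in>UNIV. \<Sum>v\<in>nbhd E u. h u v + h v u)"
    by (rule sum_nbhd_symmetrize) (rule admissible_sym[OF assms(1)])
  also have "\<dots> = (\<Sum>u\<in>UNIV. \<Sum>v\<in>nbhd E u. x u * x v * ((x u - x v) * F u v (x u - x v)))"
    using flux_term_antisym[OF assms(1) _ assms(2)]
    by (intro sum.cong refl) (simp add: h_def nbhd_def algebra_simps)
  also have "\<dots> \<ge> 0"
    using admissible_sign[OF assms(1) _ std_simplex_diff_bounded[OF assms(2)]]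
      std_simplex_nonneg[OF assms(2)]
    by (intro sum_nonneg mult_nonneg_nonneg[OF mult_nonneg_nonneg]) (auto simp: nbhd_def)
  finally show ?thesis by simp
qed

lemma gmap_std_simplex:
  assumes "admissible E F" "x \<in> std_simplex"
  shows "gmap E F x \<in> std_simplex"
proof -
  have "0 \<le> gmap E F x u" for u
  proof -
    have "\<bar>\<Sum>v\<in>nbhd E u. x v * F u v (x u - x v)\<bar> \<le> (\<Sum>v\<in>nbhd E u. x v)"
      using admissible_range[OF assms(1) _ std_simplex_diff_bounded[OF assms(2)]]
        std_simplex_nonneg[OF assms(2)]
      by (intro order.trans[OF sum_abs] sum_mono)
        (auto simp: nbhd_def abs_mult mult_left_le)
    also have "\<dots> \<le> 1"
      using sum_mono2[of UNIV "nbhd E u" x] assms(2)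
      by (simp add: std_simplex_nonneg std_simplex_sum)
    finally have "0 \<le> 1 + (\<Sum>v\<in>nbhd E u. x v * F u v (x u - x v))"
      by linarith
    then have "0 \<le> x u * (1 + (\<Sum>v\<in>nbhd E u. x v * F u v (x u - x v)))"
      using std_simplex_nonneg[OF assms(2)] by simp
    then show ?thesis
      by (simp add: gmap_def algebra_simps sum_distrib_left)
  qed
  moreover have "(\<Sum>u\<in>UNIV. gmap E F x u) = 1"
    using sum_flux_eq_0[OF assms] std_simplex_sum[OF assms(2)]
    by (simp add: gmap_eq_add_flux sum.distrib)
  ultimately show ?thesis
    by (simp add: std_simplex_def)
qed

lemma Phi_gmap:
  "Phi (gmap E F x) = Phi x + 2 * (\<Sum>u\<in>UNIV. x u * flux E F x u) + Phi (flux E F x)"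
  unfolding gmap_eq_add_flux by (rule Phi_add)

lemma Phi_le_Phi_gmap:
  assumes "admissible E F" "x \<in> std_simplex"
  shows "Phi x \<le> Phi (gmap E F x)"
  using Phi_gmap[of E F x] inner_flux_nonneg[OF assms] Phi_nonneg[of "flux E F x"] by linarith

lemma gmap_fixed_if_Phi_eq:
  assumes "admissible E F" "x \<in> std_simplex" "Phi (gmap E F x) = Phi x"
  shows "gmap E F x = x"
proof -
  have "Phi (flux E F x) = 0"
    using Phi_gmap[of E F x] inner_flux_nonneg[OF assms(1,2)] assms(3)
      Phi_nonneg[of "flux E F x"] by linarith
  then show ?thesis
    by (simp add: Phi_eq_0_iff gmap_eq_add_flux)
qed

lemma continuous_on_gmap:
  fixes E :: "'v::finite \<Rightarrow> 'v \<Rightarrow> bool"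
  assumes "admissible E F"
  shows "continuous_on std_simplex (gmap E F)"
proof (rule continuous_on_coordinatewise_then_product)
  have coord: "continuous_on std_simplex (\<lambda>x::'v \<Rightarrow> real. x w)" for w
    by (rule continuous_on_subset[OF continuous_on_product_coordinates]) simp
  have F_cont: "continuous_on std_simplex (\<lambda>x. F u v (x u - x v))" if "E u v" for u v
    by (rule continuous_on_compose2[OF admissible_continuous[OF assms that]
          continuous_on_diff[OF coord coord]])
      (blast intro: std_simplex_diff_bounded)
  show "continuous_on std_simplex (\<lambda>x. gmap E F x u)" for u
    unfolding gmap_def
    by (intro continuous_on_add continuous_on_sum continuous_on_mult coord F_cont) (simp add: nbhd_def)
qed

theorem mainTheorem3:
  fixes E :: "'v::finite \<Rightarrow> 'v \<Rightarrow> bool"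
    and F :: "'v \<Rightarrow> 'v \<Rightarrow> real \<Rightarrow> real"
  assumes "admissible E F"
  shows "(\<forall>x\<in>std_simplex. Phi (gmap E F x) \<ge> Phi x \<and>
            (Phi (gmap E F x) = Phi x \<longrightarrow> gmap E F x = x))
       \<and> (\<forall>x0\<in>std_simplex. \<forall>p r. strict_mono r \<and>
            ((\<lambda>k. (gmap E F ^^ (r k)) x0) \<longlonglongrightarrow> p) \<longrightarrow> gmap E F p = p)"
proof (intro conjI ballI allI impI)
  fix x :: "'v \<Rightarrow> real"
  assume "x \<in> std_simplex"
  then show "Phi x \<le> Phi (gmap E F x)" and "Phi (gmap E F x) = Phi x \<Longrightarrow> gmap E F x = x"
    by (simp_all add: Phi_le_Phi_gmap[OF assms] gmap_fixed_if_Phi_eq[OF assms])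
next
  fix x0 p and r :: "nat \<Rightarrow> nat"
  assume "x0 \<in> std_simplex" and "strict_mono r \<and> (\<lambda>k. (gmap E F ^^ r k) x0) \<longlonglongrightarrow> p"
  then show "gmap E F p = p"
    using limit_point_fixed_by_Lyapunov[where S = std_simplex and V = Phi and B = 1,
        OF closed_std_simplex image_subsetI[OF gmap_std_simplex[OF assms]]
        continuous_on_gmap[OF assms] continuous_on_Phi Phi_le_one
        Phi_le_Phi_gmap[OF assms] gmap_fixed_if_Phi_eq[OF assms]]
    by blast
qed

end
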